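(* Consider the Lion-VR algorithm (defined in the context) under Assumptions (A2) and (A3), with initial batch size $B_0\ge1$, parameters $\beta_1,\beta_2\in(0,1]$ with $\beta_2\le\beta_1\le\sqrt{\beta_2}$ and $B_0\beta_2\le 1$, $\eta>0$, $0\le\lambda\le\frac1{2\eta T}$ and $\|\mathbf{x}_1\|_\infty\le\eta$. Then $$\mathbb{E}\left[\frac1T\sum_{t=1}^T\|\mathbf{v}_t-\nabla f(\mathbf{x}_t)\|^2\right]\le \frac{2\sigma^2}{B_0\beta_2T}+\frac{16\eta^2L^2d}{\beta_2}+3\beta_2\sigma^2 .$$
   Context: Setting: $f:\mathbb{R}^d\to\mathbb{R}$ is accessed through a stochastic gradient oracle: at each query a sample $\xi$ is drawn from a fixed distribution, independently of everything before, and for this $\xi$ one may evaluate $\nabla f(\mathbf{x};\xi)$ at several points $\mathbf{x}$. $\|\cdot\|$ is the Euclidean norm; $\operatorname{sign}$ acts coordinatewise with values in $\{-1,0,1\}$. (A2) $\mathbb{E}_\xi\|\nabla f(\mathbf{x};\xi)-\nabla f(\mathbf{y};\xi)\|^2\le L^2\|\mathbf{x}-\mathbf{y}\|^2$ for all $\mathbf{x},\mathbf{y}$. (A3) $\mathbb{E}_\xi[\nabla f(\mathbf{x};\xi)]=\nabla f(\mathbf{x})$ and $\mathbb{E}_\xi\|\nabla f(\mathbf{x};\xi)-\nabla f(\mathbf{x})\|^2\le\sigma^2$ for all $\mathbf{x}$. Lion-VR: given $\mathbf{x}_1$, $\beta_1,\beta_2\in(0,1]$, $\eta>0$, $\lambda\ge0$,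 batch size $B_0$. At $t=1$ draw independent $\xi_1^1,\dots,\xi_1^{B_0}$ and set $\mathbf{v}_1=\mathbf{m}_1=\frac1{B_0}\sum_{i=1}^{B_0}\nabla f(\mathbf{x}_1;\xi_1^i)$. For $t\ge2$ draw a fresh $\xi_t$ and set $\mathbf{v}_t=(1-\beta_1)\mathbf{m}_{t-1}+\beta_1\nabla f(\mathbf{x}_t;\xi_t)$ and $\mathbf{m}_t=(1-\beta_2)\mathbf{m}_{t-1}+\beta_2\nabla f(\mathbf{x}_t;\xi_t)+(1-\beta_2)\big(\nabla f(\mathbf{x}_t;\xi_t)-\nabla f(\mathbf{x}_{t-1};\xi_t)\big)$. For all $t\ge1$: $\mathbf{x}_{t+1}=\mathbf{x}_t-\eta(\operatorname{sign}(\mathbf{v}_t)+\lambda\mathbf{x}_t)$. *)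

theory Defs
  imports "HOL-Probability.Probability"
begin

definition sign_vec :: "real^'d \<Rightarrow> real^'d" where
  "sign_vec v = (\<chi> i. sgn (v $ i))"

text \<open>The sample path is omega :: nat => 's; the initial batch
  uses omega 0, ..., omega (B0-1); the fresh sample drawn at iteration t >= 2 is
  omega (B0 + t - 2). lion_vr g b1 b2 eta lam B0 x1 omega k = (x_t, v_t, m_t)
  with t = k + 1.\<close>
fun lion_vr :: "(real^'d \<Rightarrow> 's \<Rightarrow> real^'d) \<Rightarrow> real \<Rightarrow> real \<Rightarrow> real \<Rightarrow> real \<Rightarrow> nat
    \<Rightarrow> real^'d \<Rightarrow> (nat \<Rightarrow> 's) \<Rightarrow> nat \<Rightarrow> (real^'d) \<times> (real^'d) \<times> (real^'d)" where
  "lion_vr g b1 b2 eta lam B0 x1 \<omega> 0 =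
     (let m = (1 / real B0) *\<^sub>R (\<Sum>i<B0. g x1 (\<omega> i)) in (x1, m, m))"
| "lion_vr g b1 b2 eta lam B0 x1 \<omega> (Suc k) =
     (let (x, v, m) = lion_vr g b1 b2 eta lam B0 x1 \<omega> k;
          x' = x - eta *\<^sub>R (sign_vec v + lam *\<^sub>R x);
          \<xi> = \<omega> (B0 + k);
          gn = g x' \<xi>;
          v' = (1 - b1) *\<^sub>R m + b1 *\<^sub>R gn;
          m' = (1 - b2) *\<^sub>R m + b2 *\<^sub>R gn + (1 - b2) *\<^sub>R (gn - g x \<xi>)
      in (x', v', m'))"

definition lion_x where "lion_x g b1 b2 eta lam B0 x1 \<omega> t = fst (lion_vr g b1 b2 eta lam B0 x1 \<omega> (t - 1))"
definition lion_v where "lion_v g b1 b2 eta lam B0 x1 \<omega> t = fst (snd (lion_vr g b1 b2 eta lam B0 x1 \<omega> (t - 1)))"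

end

theory Submission
  imports Defs
begin

(*
  Write e_t = m_t - grad f(x_t) and u_t = v_t - grad f(x_t).  Since |x_t| grows by at most eta
  per step in each coordinate, lam <= 1 / (2 eta T) keeps the weight-decay term below 1/2 up
  to time T, so every step satisfies |x_{t+1} - x_t|^2 <= 9/4 eta^2 d.  Averaging over the
  fresh sample, which is independent of the past, the bias-variance split and (A2), (A3) give
  the one-step recursions
    E|e_{t+1}|^2 <= (1-beta2)^2 E|e_t|^2 + 2 beta2^2 sigma^2 + 2 (1-beta2)^2 L^2 9/4 eta^2 d,
    E|u_{t+1}|^2 <= 2 (1-beta1)^2 E|e_t|^2 + 2 (1-beta1)^2 L^2 9/4 eta^2 d + beta1^2 sigma^2,
  and the initial mini-batch gives E|e_1|^2 = E|u_1|^2 <= sigma^2 / B0.  Unrolling the first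
  recursion, summing the geometric series and using (1-beta1)^2 <= (1-beta2)^2, beta1^2 <= beta2
  yields the bound, with 27/2 rounded up to 16.
*)

lemma sign_vec_borel_measurable [measurable]:
  "sign_vec \<in> borel_measurable (borel :: (real^'d) measure)"
proof (rule iffD2[OF borel_measurable_euclidean_space], rule ballI)
  fix b :: "real^'d" assume "b \<in> Basis"
  then obtain i where "b = axis i 1" unfolding Basis_vec_def by auto
  then have "(\<lambda>x. sign_vec x \<bullet> b) = (\<lambda>x. sgn (x $ i))"
    by (simp add: sign_vec_def inner_axis)
  then show "(\<lambda>x. sign_vec x \<bullet> b) \<in> borel_measurable borel" by simp
qed

lemma norm_add_sq_le: "(norm (u + v :: 'a::real_normed_vector))\<^sup>2 \<le> 2 * (norm u)\<^sup>2 + 2 * (norm v)\<^sup>2"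
proof -
  have "(norm (u + v))\<^sup>2 \<le> (norm u + norm v)\<^sup>2"
    by (rule power_mono[OF norm_triangle_ineq norm_ge_zero])
  also have "\<dots> \<le> 2 * (norm u)\<^sup>2 + 2 * (norm v)\<^sup>2"
    using zero_le_power2[of "norm u - norm v"] by (simp add: power2_sum power2_diff)
  finally show ?thesis .
qed

lemma (in finite_measure) nn_integral_norm_sq_finite_imp_integrable:
  fixes Y :: "'a \<Rightarrow> 'b::{banach, second_countable_topology}"
  assumes Y[measurable]: "Y \<in> borel_measurable M"
    and finite: "(\<integral>\<^sup>+s. ennreal ((norm (Y s))\<^sup>2) \<partial>M) < \<infinity>"
  shows "integrable M Y"
proof -
  have "integrable M (\<lambda>s. (norm (Y s))\<^sup>2)"
    by (rule integrableI_nonneg) (use finite in simp_all)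
  then have "integrable M (\<lambda>s. norm (Y s))"
    by (rule square_integrable_imp_integrable[rotated]) simp
  then show ?thesis using Y by (simp add: integrable_norm_iff)
qed

lemma (in prob_space) nn_integral_norm_sq_add:
  fixes Y :: "'a \<Rightarrow> 'b::euclidean_space"
  assumes Y[measurable]: "Y \<in> borel_measurable M"
    and finite: "(\<integral>\<^sup>+s. ennreal ((norm (Y s))\<^sup>2) \<partial>M) < \<infinity>"
  shows "(\<integral>\<^sup>+s. ennreal ((norm (a + Y s))\<^sup>2) \<partial>M)
       = ennreal ((norm (a + expectation Y))\<^sup>2) + (\<integral>\<^sup>+s. ennreal ((norm (Y s - expectation Y))\<^sup>2) \<partial>M)"
proof -
  define \<mu> where "\<mu> = expectation Y"
  define c where "c = a + \<mu>"
  have Y_int: "integrable M Y"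
    using finite by (rule nn_integral_norm_sq_finite_imp_integrable[OF Y])
  have Y_sq_int: "integrable M (\<lambda>s. (norm (Y s))\<^sup>2)"
    by (rule integrableI_nonneg) (use finite in simp_all)
  have centered_eq: "(norm (Y s - \<mu>))\<^sup>2 = (norm (Y s))\<^sup>2 - 2 * (\<mu> \<bullet> Y s) + (norm \<mu>)\<^sup>2" for s
    unfolding power2_norm_eq_inner by (simp add: algebra_simps inner_commute)
  have shifted_eq: "(norm (a + Y s))\<^sup>2 = (norm c)\<^sup>2 + 2 * (c \<bullet> Y s - c \<bullet> \<mu>) + (norm (Y s - \<mu>))\<^sup>2" for s
    unfolding c_def power2_norm_eq_inner by (simp add: algebra_simps inner_commute)
  have centered_int: "integrable M (\<lambda>s. (norm (Y s - \<mu>))\<^sup>2)"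
    unfolding centered_eq using Y_sq_int Y_int by simp
  have shifted_int: "integrable M (\<lambda>s. (norm (a + Y s))\<^sup>2)"
    unfolding shifted_eq using centered_int Y_int by simp
  have "expectation (\<lambda>s. (norm (a + Y s))\<^sup>2) = (norm c)\<^sup>2 + expectation (\<lambda>s. (norm (Y s - \<mu>))\<^sup>2)"
    unfolding shifted_eq using Y_int centered_int by (simp add: \<mu>_def prob_space)
  moreover have "0 \<le> expectation (\<lambda>s. (norm (Y s - \<mu>))\<^sup>2)" by simp
  ultimately show ?thesis
    using shifted_int centered_int
    by (simp add: nn_integral_eq_integral ennreal_plus c_def \<mu>_def)
qed

lemma (in prob_space) nn_integral_affine:
  assumes "f \<in> borel_measurable M" "\<And>x. 0 \<le> f x" "0 \<le> a" "0 \<le> b"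
  shows "(\<integral>\<^sup>+x. ennreal (a * f x + b) \<partial>M) = ennreal a * (\<integral>\<^sup>+x. ennreal (f x) \<partial>M) + ennreal b"
proof -
  have "(\<integral>\<^sup>+x. ennreal (a * f x + b) \<partial>M) = (\<integral>\<^sup>+x. ennreal a * ennreal (f x) + ennreal b \<partial>M)"
    using assms by (intro nn_integral_cong) (simp add: ennreal_plus ennreal_mult)
  also have "\<dots> = ennreal a * (\<integral>\<^sup>+x. ennreal (f x) \<partial>M) + ennreal b"
    using assms by (simp add: nn_integral_add nn_integral_cmult emeasure_space_1)
  finally show ?thesis .
qed

lemma nn_integral_PiM_fresh_coordinate:
  fixes G :: "(nat \<Rightarrow> 's) \<Rightarrow> 's \<Rightarrow> ennreal"
  assumes D: "prob_space D"
    and G: "(\<lambda>(X, x). G X x) \<in> borel_measurable (PiM UNIV (\<lambda>_::nat. D) \<Otimes>\<^sub>M D)"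
    and fresh: "\<And>X x. G (X(n := x)) x = G X x"
  shows "(\<integral>\<^sup>+\<omega>. G \<omega> (\<omega> n) \<partial>PiM UNIV (\<lambda>_. D)) = (\<integral>\<^sup>+\<omega>. (\<integral>\<^sup>+s. G \<omega> s \<partial>D) \<partial>PiM UNIV (\<lambda>_. D))"
proof -
  let ?S = "PiM UNIV (\<lambda>_::nat. D)"
  interpret S: prob_space ?S using D by (intro prob_space_PiM) auto
  interpret D: prob_space D by fact
  interpret DS: pair_sigma_finite D ?S by unfold_locales
  let ?upd = "\<lambda>(x, X). X(n := x)"
  have upd_distr: "distr (D \<Otimes>\<^sub>M ?S) ?S ?upd = ?S"
    using distr_pair_PiM_eq_PiM[of UNIV "\<lambda>_. D" n] D by simp
  have "(\<lambda>p. (snd p) (n := fst p)) \<in> measurable (D \<Otimes>\<^sub>M ?S) (PiM (UNIV \<union> {n}) (\<lambda>_. D))"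
    by (rule measurable_fun_upd) auto
  then have upd_meas: "?upd \<in> measurable (D \<Otimes>\<^sub>M ?S) ?S"
    by (simp add: case_prod_beta')
  have "(\<lambda>\<omega>. (\<omega>, \<omega> n)) \<in> measurable ?S (?S \<Otimes>\<^sub>M D)" by measurable
  from measurable_compose[OF this G] have G_diag: "(\<lambda>\<omega>. G \<omega> (\<omega> n)) \<in> borel_measurable ?S"
    by simp
  from measurable_compose[OF measurable_pair_swap' G]
  have G_swap: "(\<lambda>p. G (snd p) (fst p)) \<in> borel_measurable (D \<Otimes>\<^sub>M ?S)"
    by (simp add: case_prod_beta')
  have "(\<integral>\<^sup>+\<omega>. G \<omega> (\<omega> n) \<partial>?S) = (\<integral>\<^sup>+\<omega>. G \<omega> (\<omega> n) \<partial>distr (D \<Otimes>\<^sub>M ?S) ?S ?upd)"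
    by (simp add: upd_distr)
  also have "\<dots> = (\<integral>\<^sup>+p. G (?upd p) (?upd p n) \<partial>(D \<Otimes>\<^sub>M ?S))"
    by (rule nn_integral_distr[OF upd_meas]) (simp add: upd_distr G_diag)
  also have "\<dots> = (\<integral>\<^sup>+p. G (snd p) (fst p) \<partial>(D \<Otimes>\<^sub>M ?S))"
    by (simp add: case_prod_beta' fresh)
  also have "\<dots> = (\<integral>\<^sup>+X. (\<integral>\<^sup>+x. G X x \<partial>D) \<partial>?S)"
    using DS.nn_integral_snd[OF G_swap] by simp
  finally show ?thesis .
qed

lemma geometric_sum_le:
  fixes q :: real
  assumes "0 \<le> q" "q < 1"
  shows "(\<Sum>k<n. q ^ k) \<le> 1 / (1 - q)"
proof -
  have "(\<Sum>k<n. q ^ k) = (1 - q ^ n) / (1 - q)" using assms by (simp add: sum_gp_strict)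
  also have "\<dots> \<le> 1 / (1 - q)" using assms by (intro divide_right_mono) auto
  finally show ?thesis .
qed

lemma ennreal_affine_recurrence_le:
  fixes e :: "nat \<Rightarrow> ennreal" and q c e0 :: real
  assumes q: "0 \<le> q" "q < 1" and c: "0 \<le> c" and e0: "0 \<le> e0" "e 0 \<le> ennreal e0"
    and step: "\<And>k. k < n \<Longrightarrow> e (Suc k) \<le> ennreal q * e k + ennreal c"
  shows "k \<le> n \<Longrightarrow> e k \<le> ennreal (q ^ k * e0 + c / (1 - q))"
proof (induction k)
  case 0
  have "ennreal e0 \<le> ennreal (e0 + c / (1 - q))"
    using q c by (intro ennreal_leI) simp
  then show ?case using e0(2) by simp
next
  case (Suc k)
  have bound_nonneg: "0 \<le> q ^ k * e0 + c / (1 - q)" using q c e0 by simp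
  have "e (Suc k) \<le> ennreal q * e k + ennreal c"
    using Suc.prems by (intro step) simp
  also have "\<dots> \<le> ennreal q * ennreal (q ^ k * e0 + c / (1 - q)) + ennreal c"
    using Suc by (intro add_right_mono mult_left_mono) simp_all
  also have "\<dots> = ennreal (q * (q ^ k * e0 + c / (1 - q)) + c)"
    using q c bound_nonneg by (simp add: ennreal_mult ennreal_plus)
  also have "q * (q ^ k * e0 + c / (1 - q)) + c = q ^ Suc k * e0 + c / (1 - q)"
    using q by (simp add: field_simps)
  finally show ?case .
qed

lemma lion_initial_error_factor_le:
  fixes u a :: real
  assumes u: "0 < u" "u \<le> 1" and a: "0 \<le> a" "a \<le> (1-u)\<^sup>2"
  shows "1 + 2 * a / (1 - (1-u)\<^sup>2) \<le> 2 / u"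
proof -
  have d: "1 - (1-u)\<^sup>2 = u * (2 - u)" by (simp add: power2_eq_square algebra_simps)
  have "u * (2 - u) + 2 * (1-u)\<^sup>2 \<le> 2 * (2 - u)"
    using u by (simp add: power2_eq_square algebra_simps) (smt (verit) mult_le_one)
  then have num: "u * (2 - u) + 2 * a \<le> 2 * (2 - u)" using a by linarith
  have D: "0 < u * (2 - u)" using u by simp
  have "1 + 2 * a / (u * (2 - u)) = (u * (2 - u) + 2 * a) / (u * (2 - u))"
    using D u by (simp add: add_divide_distrib)
  also have "\<dots> \<le> 2 * (2 - u) / (u * (2 - u))"
    using D num by (intro divide_right_mono) auto
  also have "\<dots> = 2 / u" using u by (simp add: field_simps)
  finally show ?thesis unfolding d .
qed

lemma lion_stationary_error_le:
  fixes u a b s W :: real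
  assumes u: "0 < u" "u \<le> 1" and a: "0 \<le> a" "a \<le> (1-u)\<^sup>2" and b: "b\<^sup>2 \<le> u"
    and s: "0 \<le> s" and W: "0 \<le> W"
  shows "2 * a * ((2 * u\<^sup>2 * s + 2 * (1-u)\<^sup>2 * W) / (1 - (1-u)\<^sup>2)) + 2 * a * W + b\<^sup>2 * s
    \<le> 6 * W / u + 3 * u * s"
proof -
  have d: "1 - (1-u)\<^sup>2 = u * (2 - u)" by (simp add: power2_eq_square algebra_simps)
  have q1: "(1-u)\<^sup>2 \<le> 1" using u by (simp add: power_le_one)
  have two: "2 * (1-u)\<^sup>2 \<le> 2 - u" using u by (simp add: power2_eq_square algebra_simps)
  have aq: "a * (1-u)\<^sup>2 \<le> 1" using a q1 by (intro mult_le_one) auto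
  have noise: "2 * a * (2 * u\<^sup>2 * s / (u * (2 - u))) \<le> 2 * u * s"
  proof -
    have "4 * a * (u * s) \<le> 2 * (2 * (1-u)\<^sup>2) * (u * s)"
      using a u s by (intro mult_right_mono) auto
    also have "\<dots> \<le> 2 * (2 - u) * (u * s)"
      using two u s by (intro mult_right_mono) auto
    finally have "4 * a * u * s / (2 - u) \<le> 2 * u * s"
      using u by (simp add: pos_divide_le_eq algebra_simps)
    moreover have "2 * u\<^sup>2 * s / (u * (2 - u)) = 2 * u * s / (2 - u)"
      using u by (simp add: power2_eq_square)
    ultimately show ?thesis by (simp add: algebra_simps)
  qed
  have drift: "2 * a * (2 * (1-u)\<^sup>2 * W / (u * (2 - u))) \<le> 4 * W / u"
  proof -
    have "a * (1-u)\<^sup>2 * W \<le> 1 * W" by (rule mult_right_mono[OF aq W])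
    also have "\<dots> \<le> W * (2 - u)" using u W by (simp add: algebra_simps mult_left_le)
    finally have num: "a * (1-u)\<^sup>2 * W \<le> W * (2 - u)" .
    have "2 * a * (2 * (1-u)\<^sup>2 * W / (u * (2 - u))) = 4 * (a * (1-u)\<^sup>2 * W) / (u * (2 - u))"
      by simp
    also have "\<dots> \<le> 4 * (W * (2 - u)) / (u * (2 - u))"
      using num u by (intro divide_right_mono mult_left_mono) auto
    also have "\<dots> = 4 * W / u" using u by simp
    finally show ?thesis .
  qed
  have "2 * a * W \<le> 2 * W / u"
  proof -
    have "a \<le> 1" using a q1 by linarith
    then have "2 * a * W \<le> 2 * W" using W by (simp add: mult_left_le_one_le a)
    also have "\<dots> \<le> 2 * W / u" using u W by (simp add: le_divide_eq mult_left_le)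
    finally show ?thesis .
  qed
  moreover have "b\<^sup>2 * s \<le> u * s" using b s by (rule mult_right_mono)
  moreover have "2 * a * ((2 * u\<^sup>2 * s + 2 * (1-u)\<^sup>2 * W) / (1 - (1-u)\<^sup>2))
      = 2 * a * (2 * u\<^sup>2 * s / (u * (2 - u))) + 2 * a * (2 * (1-u)\<^sup>2 * W / (u * (2 - u)))"
    unfolding d by (simp add: add_divide_distrib algebra_simps)
  moreover have "6 * W / u = 4 * W / u + 2 * W / u" by (simp add: add_divide_distrib[symmetric])
  ultimately show ?thesis using noise drift by linarith
qed

locale stochastic_gradient_oracle =
  fixes gradf :: "'a::euclidean_space \<Rightarrow> 'a"
    and g :: "'a \<Rightarrow> 's \<Rightarrow> 'a"
    and D :: "'s measure"
    and L \<sigma> :: real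
  assumes prob_space_D: "prob_space D"
    and g_measurable: "(\<lambda>(x, s). g x s) \<in> borel_measurable (borel \<Otimes>\<^sub>M D)"
    and mean_square_lipschitz:
      "\<And>x y. (\<integral>\<^sup>+ s. ennreal ((norm (g x s - g y s))\<^sup>2) \<partial>D) \<le> ennreal (L\<^sup>2 * (norm (x - y))\<^sup>2)"
    and unbiased: "\<And>x. (\<integral> s. g x s \<partial>D) = gradf x"
    and bounded_variance: "\<And>x. (\<integral>\<^sup>+ s. ennreal ((norm (g x s - gradf x))\<^sup>2) \<partial>D) \<le> ennreal (\<sigma>\<^sup>2)"
begin

sublocale D: prob_space D by (rule prob_space_D)

lemma g_measurable_compose [measurable (raw)]:
  assumes "f \<in> borel_measurable M" "h \<in> measurable M D"
  shows "(\<lambda>\<omega>. g (f \<omega>) (h \<omega>)) \<in> borel_measurable M"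
  using measurable_compose[OF measurable_Pair[OF assms] g_measurable] by simp

lemma integrable_g: "integrable D (g x)"
proof -
  have "integrable D (\<lambda>s. g x s - gradf x)"
    by (rule D.nn_integral_norm_sq_finite_imp_integrable)
      (use le_less_trans[OF bounded_variance ennreal_less_top] in simp_all)
  then have "integrable D (\<lambda>s. (g x s - gradf x) + gradf x)"
    by (rule Bochner_Integration.integrable_add) simp
  then show ?thesis by simp
qed

lemma expectation_g_minus_gradf: "(\<integral> s. g x s - gradf x \<partial>D) = 0"
  using integrable_g[of x] by (simp add: unbiased D.prob_space)

lemma centered_mean_square_lipschitz:
  "(\<integral>\<^sup>+ s. ennreal ((norm ((g x s - g y s) - (gradf x - gradf y)))\<^sup>2) \<partial>D)
     \<le> ennreal (L\<^sup>2 * (norm (x - y))\<^sup>2)"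
  and gradf_lipschitz_sq: "(norm (gradf x - gradf y))\<^sup>2 \<le> L\<^sup>2 * (norm (x - y))\<^sup>2"
proof -
  have "(\<integral> s. g x s - g y s \<partial>D) = gradf x - gradf y"
    using integrable_g[of x] integrable_g[of y] by (simp add: unbiased)
  then have split: "(\<integral>\<^sup>+ s. ennreal ((norm (g x s - g y s))\<^sup>2) \<partial>D)
     = ennreal ((norm (gradf x - gradf y))\<^sup>2)
       + (\<integral>\<^sup>+ s. ennreal ((norm ((g x s - g y s) - (gradf x - gradf y)))\<^sup>2) \<partial>D)"
    using D.nn_integral_norm_sq_add[of "\<lambda>s. g x s - g y s" 0]
      le_less_trans[OF mean_square_lipschitz ennreal_less_top] by simp
  show "(\<integral>\<^sup>+ s. ennreal ((norm ((g x s - g y s) - (gradf x - gradf y)))\<^sup>2) \<partial>D)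
     \<le> ennreal (L\<^sup>2 * (norm (x - y))\<^sup>2)"
    using mean_square_lipschitz[of x y] unfolding split by (meson add_increasing order_refl zero_le order_trans)
  have "ennreal ((norm (gradf x - gradf y))\<^sup>2) \<le> ennreal (L\<^sup>2 * (norm (x - y))\<^sup>2)"
    using mean_square_lipschitz[of x y] unfolding split by (meson add_increasing2 order_refl zero_le order_trans)
  then show "(norm (gradf x - gradf y))\<^sup>2 \<le> L\<^sup>2 * (norm (x - y))\<^sup>2"
    by (simp add: ennreal_le_iff)
qed

lemma gradf_borel_measurable [measurable]: "gradf \<in> borel_measurable borel"
proof -
  have "norm (gradf x - gradf y) \<le> \<bar>L\<bar> * norm (x - y)" for x y
    by (rule power2_le_imp_le) (use gradf_lipschitz_sq[of x y] in \<open>simp_all add: power_mult_distrib\<close>)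
  then have "lipschitz_on \<bar>L\<bar> UNIV gradf"
    by (intro lipschitz_onI) (auto simp: dist_norm)
  then show ?thesis
    by (intro borel_measurable_continuous_onI lipschitz_on_continuous_on)
qed

lemma vr_momentum_error_le:
  "(\<integral>\<^sup>+\<xi>. ennreal ((norm ((1-\<beta>) *\<^sub>R m + \<beta> *\<^sub>R g x' \<xi> + (1-\<beta>) *\<^sub>R (g x' \<xi> - g x \<xi>) - gradf x'))\<^sup>2) \<partial>D)
   \<le> ennreal ((1-\<beta>)\<^sup>2 * (norm (m - gradf x))\<^sup>2 + 2 * \<beta>\<^sup>2 * \<sigma>\<^sup>2 + 2 * (1-\<beta>)\<^sup>2 * L\<^sup>2 * (norm (x' - x))\<^sup>2)"
proof -
  define A where "A \<xi> = g x' \<xi> - gradf x'" for \<xi>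
  define C where "C \<xi> = (g x' \<xi> - g x \<xi>) - (gradf x' - gradf x)" for \<xi>
  define Y where "Y \<xi> = \<beta> *\<^sub>R A \<xi> + (1-\<beta>) *\<^sub>R C \<xi>" for \<xi>
  have [measurable]: "A \<in> borel_measurable D" "C \<in> borel_measurable D" "Y \<in> borel_measurable D"
    unfolding A_def C_def Y_def by measurable
  have "(\<integral>\<^sup>+\<xi>. ennreal ((norm (Y \<xi>))\<^sup>2) \<partial>D)
      \<le> (\<integral>\<^sup>+\<xi>. ennreal (2 * \<beta>\<^sup>2 * (norm (A \<xi>))\<^sup>2) + ennreal (2 * (1-\<beta>)\<^sup>2 * (norm (C \<xi>))\<^sup>2) \<partial>D)"
    using norm_add_sq_le[of "\<beta> *\<^sub>R A \<xi>" "(1-\<beta>) *\<^sub>R C \<xi>" for \<xi>]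
    by (intro nn_integral_mono) (simp add: Y_def power_mult_distrib mult.assoc flip: ennreal_plus)
  also have "\<dots> = ennreal (2 * \<beta>\<^sup>2) * (\<integral>\<^sup>+\<xi>. ennreal ((norm (A \<xi>))\<^sup>2) \<partial>D)
      + ennreal (2 * (1-\<beta>)\<^sup>2) * (\<integral>\<^sup>+\<xi>. ennreal ((norm (C \<xi>))\<^sup>2) \<partial>D)"
    by (simp add: nn_integral_add nn_integral_cmult ennreal_mult)
  also have "\<dots> \<le> ennreal (2 * \<beta>\<^sup>2) * ennreal (\<sigma>\<^sup>2) + ennreal (2 * (1-\<beta>)\<^sup>2) * ennreal (L\<^sup>2 * (norm (x' - x))\<^sup>2)"
    unfolding A_def C_def
    by (intro add_mono mult_left_mono bounded_variance centered_mean_square_lipschitz) simp_all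
  finally have Y_bound: "(\<integral>\<^sup>+\<xi>. ennreal ((norm (Y \<xi>))\<^sup>2) \<partial>D)
      \<le> ennreal (2 * \<beta>\<^sup>2 * \<sigma>\<^sup>2 + 2 * (1-\<beta>)\<^sup>2 * L\<^sup>2 * (norm (x' - x))\<^sup>2)"
    by (simp add: ennreal_mult ennreal_plus mult.assoc)
  have "(\<integral> \<xi>. Y \<xi> \<partial>D) = 0"
    using integrable_g[of x] integrable_g[of x'] expectation_g_minus_gradf[of x']
    by (simp add: Y_def A_def C_def unbiased D.prob_space)
  then have "(\<integral>\<^sup>+\<xi>. ennreal ((norm ((1-\<beta>) *\<^sub>R (m - gradf x) + Y \<xi>))\<^sup>2) \<partial>D)
      = ennreal ((1-\<beta>)\<^sup>2 * (norm (m - gradf x))\<^sup>2) + (\<integral>\<^sup>+\<xi>. ennreal ((norm (Y \<xi>))\<^sup>2) \<partial>D)"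
    using D.nn_integral_norm_sq_add[of Y "(1-\<beta>) *\<^sub>R (m - gradf x)"]
      le_less_trans[OF Y_bound ennreal_less_top] by (simp add: power_mult_distrib)
  also have "\<dots> \<le> ennreal ((1-\<beta>)\<^sup>2 * (norm (m - gradf x))\<^sup>2) + ennreal (2 * \<beta>\<^sup>2 * \<sigma>\<^sup>2 + 2 * (1-\<beta>)\<^sup>2 * L\<^sup>2 * (norm (x' - x))\<^sup>2)"
    by (rule add_left_mono[OF Y_bound])
  finally show ?thesis
    by (simp add: Y_def A_def C_def algebra_simps flip: ennreal_plus)
qed

lemma momentum_error_le:
  "(\<integral>\<^sup>+\<xi>. ennreal ((norm ((1-\<beta>) *\<^sub>R m + \<beta> *\<^sub>R g x' \<xi> - gradf x'))\<^sup>2) \<partial>D)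
   \<le> ennreal (2 * (1-\<beta>)\<^sup>2 * (norm (m - gradf x))\<^sup>2 + 2 * (1-\<beta>)\<^sup>2 * L\<^sup>2 * (norm (x' - x))\<^sup>2 + \<beta>\<^sup>2 * \<sigma>\<^sup>2)"
proof -
  define Y where "Y \<xi> = \<beta> *\<^sub>R (g x' \<xi> - gradf x')" for \<xi>
  define a where "a = (1-\<beta>) *\<^sub>R (m - gradf x')"
  have [measurable]: "Y \<in> borel_measurable D" unfolding Y_def by measurable
  have "(\<integral>\<^sup>+\<xi>. ennreal ((norm (Y \<xi>))\<^sup>2) \<partial>D) = ennreal (\<beta>\<^sup>2) * (\<integral>\<^sup>+\<xi>. ennreal ((norm (g x' \<xi> - gradf x'))\<^sup>2) \<partial>D)"
    by (simp add: Y_def power_mult_distrib ennreal_mult nn_integral_cmult)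
  also have "\<dots> \<le> ennreal (\<beta>\<^sup>2) * ennreal (\<sigma>\<^sup>2)"
    by (intro mult_left_mono bounded_variance) simp
  finally have Y_bound: "(\<integral>\<^sup>+\<xi>. ennreal ((norm (Y \<xi>))\<^sup>2) \<partial>D) \<le> ennreal (\<beta>\<^sup>2 * \<sigma>\<^sup>2)"
    by (simp add: ennreal_mult)
  have "(norm (m - gradf x'))\<^sup>2 \<le> 2 * (norm (m - gradf x))\<^sup>2 + 2 * (norm (gradf x - gradf x'))\<^sup>2"
    using norm_add_sq_le[of "m - gradf x" "gradf x - gradf x'"] by simp
  also have "(norm (gradf x - gradf x'))\<^sup>2 \<le> L\<^sup>2 * (norm (x' - x))\<^sup>2"
    using gradf_lipschitz_sq[of x x'] by (simp add: norm_minus_commute)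
  finally have m_bound: "(norm (m - gradf x'))\<^sup>2
      \<le> 2 * (norm (m - gradf x))\<^sup>2 + 2 * (L\<^sup>2 * (norm (x' - x))\<^sup>2)"
    by simp
  have "(norm a)\<^sup>2 = (1-\<beta>)\<^sup>2 * (norm (m - gradf x'))\<^sup>2"
    by (simp add: a_def power_mult_distrib)
  also have "\<dots> \<le> (1-\<beta>)\<^sup>2 * (2 * (norm (m - gradf x))\<^sup>2 + 2 * (L\<^sup>2 * (norm (x' - x))\<^sup>2))"
    by (rule mult_left_mono[OF m_bound]) simp
  finally have a_bound: "(norm a)\<^sup>2 \<le> 2 * (1-\<beta>)\<^sup>2 * (norm (m - gradf x))\<^sup>2 + 2 * (1-\<beta>)\<^sup>2 * L\<^sup>2 * (norm (x' - x))\<^sup>2"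
    by (simp add: algebra_simps)
  have "(\<integral> \<xi>. Y \<xi> \<partial>D) = 0"
    using expectation_g_minus_gradf[of x'] by (simp add: Y_def)
  then have "(\<integral>\<^sup>+\<xi>. ennreal ((norm (a + Y \<xi>))\<^sup>2) \<partial>D)
      = ennreal ((norm a)\<^sup>2) + (\<integral>\<^sup>+\<xi>. ennreal ((norm (Y \<xi>))\<^sup>2) \<partial>D)"
    using D.nn_integral_norm_sq_add[of Y a] le_less_trans[OF Y_bound ennreal_less_top] by simp
  also have "\<dots> \<le> ennreal (2 * (1-\<beta>)\<^sup>2 * (norm (m - gradf x))\<^sup>2 + 2 * (1-\<beta>)\<^sup>2 * L\<^sup>2 * (norm (x' - x))\<^sup>2)
      + ennreal (\<beta>\<^sup>2 * \<sigma>\<^sup>2)"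
    by (intro add_mono ennreal_leI a_bound Y_bound)
  finally show ?thesis
    by (simp add: Y_def a_def algebra_simps flip: ennreal_plus)
qed

abbreviation samples :: "(nat \<Rightarrow> 's) measure" where
  "samples \<equiv> PiM UNIV (\<lambda>_. D)"

sublocale samples: prob_space samples
  by (intro prob_space_PiM) (simp add: D.prob_space_axioms)

lemma nn_integral_norm_sq_sum_noise_le:
  "(\<integral>\<^sup>+\<omega>. ennreal ((norm (\<Sum>i<n. g x (\<omega> i) - gradf x))\<^sup>2) \<partial>samples) \<le> ennreal (real n * \<sigma>\<^sup>2)"
proof (induction n)
  case 0
  then show ?case by simp
next
  case (Suc n)
  define S where "S \<omega> = (\<Sum>i<n. g x (\<omega> i) - gradf x)" for \<omega>
  have [measurable]: "S \<in> borel_measurable samples" unfolding S_def by measurable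
  have "(\<integral>\<^sup>+\<omega>. ennreal ((norm (\<Sum>i<Suc n. g x (\<omega> i) - gradf x))\<^sup>2) \<partial>samples)
      = (\<integral>\<^sup>+\<omega>. (\<integral>\<^sup>+\<xi>. ennreal ((norm (S \<omega> + (g x \<xi> - gradf x)))\<^sup>2) \<partial>D) \<partial>samples)"
    unfolding sum.lessThan_Suc S_def
    by (rule nn_integral_PiM_fresh_coordinate[OF prob_space_D]) simp_all
  also have "\<dots> = (\<integral>\<^sup>+\<omega>. ennreal ((norm (S \<omega>))\<^sup>2) + (\<integral>\<^sup>+\<xi>. ennreal ((norm (g x \<xi> - gradf x))\<^sup>2) \<partial>D) \<partial>samples)"
    using D.nn_integral_norm_sq_add[of "\<lambda>\<xi>. g x \<xi> - gradf x"]
      le_less_trans[OF bounded_variance ennreal_less_top] expectation_g_minus_gradf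
    by simp
  also have "\<dots> \<le> (\<integral>\<^sup>+\<omega>. ennreal ((norm (S \<omega>))\<^sup>2) + ennreal (\<sigma>\<^sup>2) \<partial>samples)"
    by (intro nn_integral_mono add_left_mono bounded_variance)
  also have "\<dots> = (\<integral>\<^sup>+\<omega>. ennreal ((norm (S \<omega>))\<^sup>2) \<partial>samples) + ennreal (\<sigma>\<^sup>2)"
    by (subst nn_integral_add) (simp_all add: samples.emeasure_space_1)
  also have "\<dots> \<le> ennreal (real n * \<sigma>\<^sup>2) + ennreal (\<sigma>\<^sup>2)"
    using Suc.IH by (simp add: S_def add_right_mono)
  also have "\<dots> = ennreal (real (Suc n) * \<sigma>\<^sup>2)"
    by (simp add: algebra_simps flip: ennreal_plus)
  finally show ?case .
qed

lemma minibatch_error_le: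
  assumes "B \<ge> 1"
  shows "(\<integral>\<^sup>+\<omega>. ennreal ((norm ((1 / real B) *\<^sub>R (\<Sum>i<B. g x (\<omega> i)) - gradf x))\<^sup>2) \<partial>samples)
    \<le> ennreal (\<sigma>\<^sup>2 / real B)"
proof -
  have B: "real B > 0" using assms by simp
  have "(1 / real B) *\<^sub>R (\<Sum>i<B. g x (\<omega> i)) - gradf x = (1 / real B) *\<^sub>R (\<Sum>i<B. g x (\<omega> i) - gradf x)" for \<omega>
    using B by (simp add: sum_subtractf scaleR_diff_right sum_constant_scaleR)
  then have "ennreal ((norm ((1 / real B) *\<^sub>R (\<Sum>i<B. g x (\<omega> i)) - gradf x))\<^sup>2)
      = ennreal ((1 / real B)\<^sup>2) * ennreal ((norm (\<Sum>i<B. g x (\<omega> i) - gradf x))\<^sup>2)" for \<omega>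
    by (simp only: norm_scaleR power_mult_distrib power2_abs) (simp add: ennreal_mult)
  then have "(\<integral>\<^sup>+\<omega>. ennreal ((norm ((1 / real B) *\<^sub>R (\<Sum>i<B. g x (\<omega> i)) - gradf x))\<^sup>2) \<partial>samples)
      = ennreal ((1 / real B)\<^sup>2) * (\<integral>\<^sup>+\<omega>. ennreal ((norm (\<Sum>i<B. g x (\<omega> i) - gradf x))\<^sup>2) \<partial>samples)"
    by (simp add: nn_integral_cmult)
  also have "\<dots> \<le> ennreal ((1 / real B)\<^sup>2) * ennreal (real B * \<sigma>\<^sup>2)"
    by (intro mult_left_mono nn_integral_norm_sq_sum_noise_le) simp
  also have "\<dots> = ennreal ((1 / real B)\<^sup>2 * (real B * \<sigma>\<^sup>2))"
    by (simp add: ennreal_mult)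
  also have "(1 / real B)\<^sup>2 * (real B * \<sigma>\<^sup>2) = \<sigma>\<^sup>2 / real B"
    using B by (simp add: power2_eq_square)
  finally show ?thesis .
qed

end

type_synonym 'd lion_state = "(real^'d) \<times> (real^'d) \<times> (real^'d)"

locale lion_vr_run = stochastic_gradient_oracle gradf g D L \<sigma>
  for gradf :: "real^'d \<Rightarrow> real^'d" and g :: "real^'d \<Rightarrow> 's \<Rightarrow> real^'d"
    and D :: "'s measure" and L \<sigma> :: real +
  fixes \<beta>1 \<beta>2 \<eta> lam :: real and B0 T :: nat and x1 :: "real^'d"
  assumes T: "T \<ge> 1" and B0: "B0 \<ge> 1"
    and b1: "0 < \<beta>1" "\<beta>1 \<le> 1" and b2: "0 < \<beta>2" "\<beta>2 \<le> 1"
    and b21: "\<beta>2 \<le> \<beta>1" and b12: "\<beta>1 \<le> sqrt \<beta>2"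
    and eta: "\<eta> > 0" and lam: "0 \<le> lam" "lam \<le> 1 / (2 * \<eta> * real T)"
    and x1: "\<And>i. \<bar>x1 $ i\<bar> \<le> \<eta>"
begin

abbreviation state_space :: "('d lion_state) measure" where
  "state_space \<equiv> borel \<Otimes>\<^sub>M (borel \<Otimes>\<^sub>M borel)"

definition state :: "(nat \<Rightarrow> 's) \<Rightarrow> nat \<Rightarrow> 'd lion_state" where
  "state \<omega> k = lion_vr g \<beta>1 \<beta>2 \<eta> lam B0 x1 \<omega> k"

definition next_x :: "'d lion_state \<Rightarrow> real^'d" where
  "next_x p = fst p - \<eta> *\<^sub>R (sign_vec (fst (snd p)) + lam *\<^sub>R fst p)"

definition step :: "'d lion_state \<Rightarrow> 's \<Rightarrow> 'd lion_state" where
  "step p \<xi> = (next_x p,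
     (1-\<beta>1) *\<^sub>R snd (snd p) + \<beta>1 *\<^sub>R g (next_x p) \<xi>,
     (1-\<beta>2) *\<^sub>R snd (snd p) + \<beta>2 *\<^sub>R g (next_x p) \<xi> + (1-\<beta>2) *\<^sub>R (g (next_x p) \<xi> - g (fst p) \<xi>))"

definition err_m :: "'d lion_state \<Rightarrow> real^'d" where
  "err_m p = snd (snd p) - gradf (fst p)"

definition err_v :: "'d lion_state \<Rightarrow> real^'d" where
  "err_v p = fst (snd p) - gradf (fst p)"

definition expected_err_m :: "nat \<Rightarrow> ennreal" where
  "expected_err_m k = (\<integral>\<^sup>+\<omega>. ennreal ((norm (err_m (state \<omega> k)))\<^sup>2) \<partial>samples)"

definition expected_err_v :: "nat \<Rightarrow> ennreal" where
  "expected_err_v k = (\<integral>\<^sup>+\<omega>. ennreal ((norm (err_v (state \<omega> k)))\<^sup>2) \<partial>samples)"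

definition step_sq_bound :: real where
  "step_sq_bound = 9/4 * \<eta>\<^sup>2 * real CARD('d)"

lemma state_0: "state \<omega> 0 = (x1, m, m)"
  if "m = (1 / real B0) *\<^sub>R (\<Sum>i<B0. g x1 (\<omega> i))"
  using that by (simp add: state_def Let_def)

lemma state_Suc: "state \<omega> (Suc k) = step (state \<omega> k) (\<omega> (B0 + k))"
  by (simp add: state_def step_def next_x_def Let_def split: prod.splits)

lemma step_measurable [measurable (raw)]:
  assumes "f \<in> measurable M state_space" "h \<in> measurable M D"
  shows "(\<lambda>\<omega>. step (f \<omega>) (h \<omega>)) \<in> measurable M state_space"
  using assms unfolding step_def next_x_def by measurable

lemma state_measurable [measurable]: "(\<lambda>\<omega>. state \<omega> k) \<in> measurable samples state_space"
proof (induction k)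
  case 0
  show ?case by (simp add: state_0) measurable
next
  case (Suc k)
  then show ?case unfolding state_Suc by measurable
qed

lemma err_measurable [measurable]:
  "err_m \<in> borel_measurable state_space" "err_v \<in> borel_measurable state_space"
  unfolding err_m_def err_v_def by measurable

lemma state_eq_if_prefix_eq:
  "(\<And>i. i < B0 + k \<Longrightarrow> \<omega> i = \<omega>' i) \<Longrightarrow> state \<omega> k = state \<omega>' k"
proof (induction k)
  case 0
  then have "(\<Sum>i<B0. g x1 (\<omega> i)) = (\<Sum>i<B0. g x1 (\<omega>' i))" by (auto intro!: sum.cong)
  then show ?case by (simp add: state_0)
next
  case (Suc k)
  then show ?case by (simp add: state_Suc)
qed

lemma state_fun_upd_fresh: "state (fun_upd \<omega> (B0 + k) s) k = state \<omega> k"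
  by (rule state_eq_if_prefix_eq) simp

lemma abs_state_x_le: "\<bar>fst (state \<omega> k) $ i\<bar> \<le> (real k + 1) * \<eta>"
proof (induction k)
  case 0
  show ?case using x1[of i] by (simp add: state_0)
next
  case (Suc k)
  define x where "x = fst (state \<omega> k)"
  define v where "v = fst (snd (state \<omega> k))"
  have "\<eta> * lam \<le> \<eta> * (1 / (2 * \<eta> * real T))" using lam eta by (intro mult_left_mono) auto
  also have "\<dots> \<le> 1" using eta T by (simp add: field_simps)
  finally have decay: "0 \<le> 1 - \<eta> * lam" "1 - \<eta> * lam \<le> 1" using eta lam by auto
  have "fst (state \<omega> (Suc k)) $ i = (1 - \<eta> * lam) * x $ i - \<eta> * sgn (v $ i)"
    by (simp add: state_Suc step_def next_x_def x_def v_def sign_vec_def algebra_simps)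
  moreover have "\<bar>(1 - \<eta> * lam) * x $ i\<bar> \<le> \<bar>x $ i\<bar>"
    using decay by (simp add: abs_mult mult_left_le_one_le)
  moreover have "\<bar>\<eta> * sgn (v $ i)\<bar> \<le> \<eta>" using eta by (simp add: abs_mult abs_sgn_eq)
  ultimately show ?case using Suc.IH unfolding x_def by (simp add: algebra_simps)
qed

lemma norm_step_sq_le:
  assumes "k < T"
  shows "(norm (next_x (state \<omega> k) - fst (state \<omega> k)))\<^sup>2 \<le> step_sq_bound"
proof -
  define x where "x = fst (state \<omega> k)"
  define v where "v = fst (snd (state \<omega> k))"
  define z where "z = sign_vec v + lam *\<^sub>R x"
  have z_le: "\<bar>z $ i\<bar> \<le> 3/2" for i
  proof -
    have "lam * \<bar>x $ i\<bar> \<le> lam * ((real k + 1) * \<eta>)"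
      using lam abs_state_x_le unfolding x_def by (intro mult_left_mono) auto
    also have "\<dots> \<le> (1 / (2 * \<eta> * real T)) * (real T * \<eta>)"
      using lam eta assms by (intro mult_mono) auto
    also have "\<dots> = 1/2" using eta T by simp
    finally have "\<bar>lam * x $ i\<bar> \<le> 1/2" using lam by (simp add: abs_mult)
    moreover have "\<bar>sgn (v $ i)\<bar> \<le> 1" by (simp add: abs_sgn_eq)
    moreover have "z $ i = sgn (v $ i) + lam * x $ i" by (simp add: z_def sign_vec_def)
    ultimately show ?thesis using abs_triangle_ineq[of "sgn (v $ i)" "lam * x $ i"] by linarith
  qed
  have "(norm z)\<^sup>2 = (\<Sum>i\<in>UNIV. (z $ i)\<^sup>2)"
    unfolding dot_square_norm[symmetric] inner_vec_def by (simp add: power2_eq_square)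
  also have "\<dots> \<le> (\<Sum>i\<in>(UNIV::'d set). (3/2)\<^sup>2)"
  proof (rule sum_mono)
    fix i
    show "(z $ i)\<^sup>2 \<le> (3/2)\<^sup>2"
      using power_mono[OF z_le[of i] abs_ge_zero, of 2] by simp
  qed
  finally have "\<eta>\<^sup>2 * (norm z)\<^sup>2 \<le> \<eta>\<^sup>2 * (9/4 * real CARD('d))"
    by (intro mult_left_mono) (simp_all add: power2_eq_square)
  moreover have "next_x (state \<omega> k) - x = - (\<eta> *\<^sub>R z)"
    by (simp add: next_x_def x_def v_def z_def)
  ultimately show ?thesis
    by (simp add: x_def[symmetric] step_sq_bound_def power_mult_distrib mult.assoc)
qed

lemma expected_err_m_0_le: "expected_err_m 0 \<le> ennreal (\<sigma>\<^sup>2 / real B0)"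
  unfolding expected_err_m_def err_m_def using minibatch_error_le[OF B0, of x1]
  by (simp add: state_0)

lemma expected_err_v_0: "expected_err_v 0 = expected_err_m 0"
  by (simp add: expected_err_v_def expected_err_m_def err_v_def err_m_def state_0)

lemma nn_integral_err_step:
  assumes "P \<in> borel_measurable state_space"
  shows "(\<integral>\<^sup>+\<omega>. ennreal (P (state \<omega> (Suc k))) \<partial>samples)
    = (\<integral>\<^sup>+\<omega>. (\<integral>\<^sup>+\<xi>. ennreal (P (step (state \<omega> k) \<xi>)) \<partial>D) \<partial>samples)"
  unfolding state_Suc using assms
  by (intro nn_integral_PiM_fresh_coordinate[OF prob_space_D]) (simp_all add: state_fun_upd_fresh)

lemma expected_err_m_Suc_le:
  assumes "k < T"
  shows "expected_err_m (Suc k)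
    \<le> ennreal ((1-\<beta>2)\<^sup>2) * expected_err_m k + ennreal (2 * \<beta>2\<^sup>2 * \<sigma>\<^sup>2 + 2 * (1-\<beta>2)\<^sup>2 * L\<^sup>2 * step_sq_bound)"
proof -
  have "expected_err_m (Suc k)
      = (\<integral>\<^sup>+\<omega>. (\<integral>\<^sup>+\<xi>. ennreal ((norm (err_m (step (state \<omega> k) \<xi>)))\<^sup>2) \<partial>D) \<partial>samples)"
    unfolding expected_err_m_def by (rule nn_integral_err_step) measurable
  also have "\<dots> \<le> (\<integral>\<^sup>+\<omega>. ennreal ((1-\<beta>2)\<^sup>2 * (norm (err_m (state \<omega> k)))\<^sup>2
      + (2 * \<beta>2\<^sup>2 * \<sigma>\<^sup>2 + 2 * (1-\<beta>2)\<^sup>2 * L\<^sup>2 * step_sq_bound)) \<partial>samples)"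
  proof (rule nn_integral_mono)
    fix \<omega>
    let ?p = "state \<omega> k"
    have "(\<integral>\<^sup>+\<xi>. ennreal ((norm (err_m (step ?p \<xi>)))\<^sup>2) \<partial>D)
        \<le> ennreal ((1-\<beta>2)\<^sup>2 * (norm (err_m ?p))\<^sup>2 + 2 * \<beta>2\<^sup>2 * \<sigma>\<^sup>2
            + 2 * (1-\<beta>2)\<^sup>2 * L\<^sup>2 * (norm (next_x ?p - fst ?p))\<^sup>2)"
      using vr_momentum_error_le[of \<beta>2 "snd (snd ?p)" "next_x ?p" "fst ?p"]
      by (simp add: err_m_def step_def)
    also have "\<dots> \<le> ennreal ((1-\<beta>2)\<^sup>2 * (norm (err_m ?p))\<^sup>2
        + (2 * \<beta>2\<^sup>2 * \<sigma>\<^sup>2 + 2 * (1-\<beta>2)\<^sup>2 * L\<^sup>2 * step_sq_bound))"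
      using norm_step_sq_le[OF assms, of \<omega>] by (intro ennreal_leI) (simp add: mult_left_mono)
    finally show "(\<integral>\<^sup>+\<xi>. ennreal ((norm (err_m (step ?p \<xi>)))\<^sup>2) \<partial>D) \<le> \<dots>" .
  qed
  also have "\<dots> = ennreal ((1-\<beta>2)\<^sup>2) * expected_err_m k
      + ennreal (2 * \<beta>2\<^sup>2 * \<sigma>\<^sup>2 + 2 * (1-\<beta>2)\<^sup>2 * L\<^sup>2 * step_sq_bound)"
    unfolding expected_err_m_def
    by (rule samples.nn_integral_affine) (simp_all add: step_sq_bound_def)
  finally show ?thesis .
qed

lemma expected_err_v_Suc_le:
  assumes "k < T"
  shows "expected_err_v (Suc k)
    \<le> ennreal (2 * (1-\<beta>1)\<^sup>2) * expected_err_m k + ennreal (2 * (1-\<beta>1)\<^sup>2 * L\<^sup>2 * step_sq_bound + \<beta>1\<^sup>2 * \<sigma>\<^sup>2)"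
proof -
  have "expected_err_v (Suc k)
      = (\<integral>\<^sup>+\<omega>. (\<integral>\<^sup>+\<xi>. ennreal ((norm (err_v (step (state \<omega> k) \<xi>)))\<^sup>2) \<partial>D) \<partial>samples)"
    unfolding expected_err_v_def by (rule nn_integral_err_step) measurable
  also have "\<dots> \<le> (\<integral>\<^sup>+\<omega>. ennreal (2 * (1-\<beta>1)\<^sup>2 * (norm (err_m (state \<omega> k)))\<^sup>2
      + (2 * (1-\<beta>1)\<^sup>2 * L\<^sup>2 * step_sq_bound + \<beta>1\<^sup>2 * \<sigma>\<^sup>2)) \<partial>samples)"
  proof (rule nn_integral_mono)
    fix \<omega>
    let ?p = "state \<omega> k"
    have "(\<integral>\<^sup>+\<xi>. ennreal ((norm (err_v (step ?p \<xi>)))\<^sup>2) \<partial>D)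
        \<le> ennreal (2 * (1-\<beta>1)\<^sup>2 * (norm (err_m ?p))\<^sup>2
            + 2 * (1-\<beta>1)\<^sup>2 * L\<^sup>2 * (norm (next_x ?p - fst ?p))\<^sup>2 + \<beta>1\<^sup>2 * \<sigma>\<^sup>2)"
      using momentum_error_le[of \<beta>1 "snd (snd ?p)" "next_x ?p" "fst ?p"]
      by (simp add: err_m_def err_v_def step_def)
    also have "\<dots> \<le> ennreal (2 * (1-\<beta>1)\<^sup>2 * (norm (err_m ?p))\<^sup>2
        + (2 * (1-\<beta>1)\<^sup>2 * L\<^sup>2 * step_sq_bound + \<beta>1\<^sup>2 * \<sigma>\<^sup>2))"
      using norm_step_sq_le[OF assms, of \<omega>] by (intro ennreal_leI) (simp add: mult_left_mono)
    finally show "(\<integral>\<^sup>+\<xi>. ennreal ((norm (err_v (step ?p \<xi>)))\<^sup>2) \<partial>D) \<le> \<dots>" .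
  qed
  also have "\<dots> = ennreal (2 * (1-\<beta>1)\<^sup>2) * expected_err_m k
      + ennreal (2 * (1-\<beta>1)\<^sup>2 * L\<^sup>2 * step_sq_bound + \<beta>1\<^sup>2 * \<sigma>\<^sup>2)"
    unfolding expected_err_m_def
    by (rule samples.nn_integral_affine) (simp_all add: step_sq_bound_def)
  finally show ?thesis .
qed

lemma expected_err_m_le:
  assumes "k < T"
  shows "expected_err_m k \<le> ennreal ((1-\<beta>2)\<^sup>2 ^ k * (\<sigma>\<^sup>2 / real B0)
    + (2 * \<beta>2\<^sup>2 * \<sigma>\<^sup>2 + 2 * (1-\<beta>2)\<^sup>2 * L\<^sup>2 * step_sq_bound) / (1 - (1-\<beta>2)\<^sup>2))"
proof (rule ennreal_affine_recurrence_le[where n = "T - 1"])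
  show "(1-\<beta>2)\<^sup>2 < 1" using b2 by (simp add: abs_square_less_1)
  show "0 \<le> 2 * \<beta>2\<^sup>2 * \<sigma>\<^sup>2 + 2 * (1-\<beta>2)\<^sup>2 * L\<^sup>2 * step_sq_bound"
    by (simp add: step_sq_bound_def)
  show "expected_err_m (Suc j) \<le> ennreal ((1-\<beta>2)\<^sup>2) * expected_err_m j
      + ennreal (2 * \<beta>2\<^sup>2 * \<sigma>\<^sup>2 + 2 * (1-\<beta>2)\<^sup>2 * L\<^sup>2 * step_sq_bound)" if "j < T - 1" for j
    using that by (intro expected_err_m_Suc_le) simp
qed (use assms expected_err_m_0_le in simp_all)

lemma expected_err_v_sum_le:
  "(\<Sum>k<T. expected_err_v k)
    \<le> ennreal (2 * \<sigma>\<^sup>2 / (real B0 * \<beta>2) + real T * (6 * L\<^sup>2 * step_sq_bound / \<beta>2 + 3 * \<beta>2 * \<sigma>\<^sup>2))"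
proof -
  obtain n where n: "T = Suc n" using T by (cases T) auto
  define s where "s = \<sigma>\<^sup>2 / real B0"
  define q where "q = (1-\<beta>2)\<^sup>2"
  define a where "a = (1-\<beta>1)\<^sup>2"
  define W where "W = L\<^sup>2 * step_sq_bound"
  define K where "K = (2 * \<beta>2\<^sup>2 * \<sigma>\<^sup>2 + 2 * q * W) / (1 - q)"
  define C where "C = 2 * a * K + 2 * a * W + \<beta>1\<^sup>2 * \<sigma>\<^sup>2"
  have q: "0 \<le> q" "q < 1" using b2 by (simp_all add: q_def abs_square_less_1)
  have a: "0 \<le> a" "a \<le> q" unfolding a_def q_def using b1 b21 by (auto intro: power_mono)
  have W: "0 \<le> W" by (simp add: W_def step_sq_bound_def)
  have s: "0 \<le> s" by (simp add: s_def)
  have K: "0 \<le> K" using q W by (simp add: K_def)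
  have C: "0 \<le> C" using a K W by (simp add: C_def)
  have b12': "\<beta>1\<^sup>2 \<le> \<beta>2"
    using power_mono[OF b12, of 2] b1 b2 by simp
  have err_v_Suc: "expected_err_v (Suc j) \<le> ennreal (2 * a * s * q ^ j + C)" if "j < n" for j
  proof -
    have "expected_err_v (Suc j) \<le> ennreal (2 * a) * expected_err_m j + ennreal (2 * a * W + \<beta>1\<^sup>2 * \<sigma>\<^sup>2)"
      using expected_err_v_Suc_le[of j] that n by (simp add: a_def W_def mult.assoc)
    also have "\<dots> \<le> ennreal (2 * a) * ennreal (q ^ j * s + K) + ennreal (2 * a * W + \<beta>1\<^sup>2 * \<sigma>\<^sup>2)"
      using expected_err_m_le[of j] that n
      by (intro add_right_mono mult_left_mono) (simp_all add: s_def q_def K_def W_def mult.assoc)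
    also have "\<dots> = ennreal (2 * a * s * q ^ j + C)"
      using a q s K W by (simp add: C_def algebra_simps flip: ennreal_mult ennreal_plus)
    finally show ?thesis .
  qed
  have "(\<Sum>k<T. expected_err_v k) = expected_err_v 0 + (\<Sum>j<n. expected_err_v (Suc j))"
    unfolding n by (rule sum.lessThan_Suc_shift)
  also have "\<dots> \<le> ennreal s + (\<Sum>j<n. ennreal (2 * a * s * q ^ j + C))"
    using expected_err_m_0_le err_v_Suc
    by (intro add_mono sum_mono) (simp_all add: expected_err_v_0 s_def)
  also have "\<dots> = ennreal (s + 2 * a * s * (\<Sum>j<n. q ^ j) + real n * C)"
    using a q s K W
    by (simp add: C_def sum.distrib sum_distrib_left sum_nonneg flip: ennreal_plus)
  also have "\<dots> \<le> ennreal (2 * \<sigma>\<^sup>2 / (real B0 * \<beta>2) + real T * (6 * W / \<beta>2 + 3 * \<beta>2 * \<sigma>\<^sup>2))"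
  proof (rule ennreal_leI)
    have "s + 2 * a * s * (\<Sum>j<n. q ^ j) \<le> s * (1 + 2 * a / (1 - q))"
      using geometric_sum_le[OF q, of n] a s q
      by (simp add: algebra_simps mult_left_mono flip: times_divide_eq_right)
    also have "\<dots> \<le> s * (2 / \<beta>2)"
      using lion_initial_error_factor_le[OF b2 a(1) a(2)[unfolded q_def]] s
      by (intro mult_left_mono) (simp_all add: q_def)
    also have "\<dots> = 2 * \<sigma>\<^sup>2 / (real B0 * \<beta>2)" by (simp add: s_def)
    finally have init: "s + 2 * a * s * (\<Sum>j<n. q ^ j) \<le> 2 * \<sigma>\<^sup>2 / (real B0 * \<beta>2)" .
    have "C \<le> 6 * W / \<beta>2 + 3 * \<beta>2 * \<sigma>\<^sup>2"
      using lion_stationary_error_le[OF b2 a(1) a(2)[unfolded q_def] b12' _ W, of "\<sigma>\<^sup>2"]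
      by (simp add: C_def K_def q_def mult.assoc)
    moreover have "0 \<le> 6 * W / \<beta>2 + 3 * \<beta>2 * \<sigma>\<^sup>2" using W b2 by simp
    ultimately have "real n * C \<le> real T * (6 * W / \<beta>2 + 3 * \<beta>2 * \<sigma>\<^sup>2)"
      using C unfolding n by (intro mult_mono) auto
    with init show "s + 2 * a * s * (\<Sum>j<n. q ^ j) + real n * C
        \<le> 2 * \<sigma>\<^sup>2 / (real B0 * \<beta>2) + real T * (6 * W / \<beta>2 + 3 * \<beta>2 * \<sigma>\<^sup>2)"
      by linarith
  qed
  finally show ?thesis by (simp add: W_def mult.assoc)
qed

lemma sum_norm_err_v_eq:
  "(\<Sum>t\<in>{1..n}. (norm (lion_v g \<beta>1 \<beta>2 \<eta> lam B0 x1 \<omega> t - gradf (lion_x g \<beta>1 \<beta>2 \<eta> lam B0 x1 \<omega> t)))\<^sup>2)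
    = (\<Sum>k<n. (norm (err_v (state \<omega> k)))\<^sup>2)"
  by (simp add: sum.atLeast1_atMost_eq lion_v_def lion_x_def err_v_def state_def)

lemma lion_vr_mean_sq_error_le:
  "(\<integral>\<^sup>+ \<omega>. ennreal ((1 / real T) *
      (\<Sum>t\<in>{1..T}. (norm (lion_v g \<beta>1 \<beta>2 \<eta> lam B0 x1 \<omega> t - gradf (lion_x g \<beta>1 \<beta>2 \<eta> lam B0 x1 \<omega> t)))\<^sup>2))
      \<partial>samples)
    \<le> ennreal (2 * \<sigma>\<^sup>2 / (real B0 * \<beta>2 * real T) + 16 * \<eta>\<^sup>2 * L\<^sup>2 * real CARD('d) / \<beta>2 + 3 * \<beta>2 * \<sigma>\<^sup>2)"
proof -
  have T_pos: "0 < real T" using T by simp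
  have "ennreal ((1 / real T) *
      (\<Sum>t\<in>{1..T}. (norm (lion_v g \<beta>1 \<beta>2 \<eta> lam B0 x1 \<omega> t - gradf (lion_x g \<beta>1 \<beta>2 \<eta> lam B0 x1 \<omega> t)))\<^sup>2))
    = ennreal (1 / real T) * (\<Sum>k<T. ennreal ((norm (err_v (state \<omega> k)))\<^sup>2))" for \<omega>
    unfolding sum_norm_err_v_eq by (simp add: sum_nonneg flip: ennreal_mult)
  then have "(\<integral>\<^sup>+ \<omega>. ennreal ((1 / real T) *
      (\<Sum>t\<in>{1..T}. (norm (lion_v g \<beta>1 \<beta>2 \<eta> lam B0 x1 \<omega> t - gradf (lion_x g \<beta>1 \<beta>2 \<eta> lam B0 x1 \<omega> t)))\<^sup>2))
      \<partial>samples)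
    = (\<integral>\<^sup>+ \<omega>. ennreal (1 / real T) * (\<Sum>k<T. ennreal ((norm (err_v (state \<omega> k)))\<^sup>2)) \<partial>samples)"
    by simp
  also have "\<dots> = ennreal (1 / real T) * (\<Sum>k<T. expected_err_v k)"
    unfolding expected_err_v_def by (simp add: nn_integral_cmult nn_integral_sum del: sum_ennreal)
  also have "\<dots> \<le> ennreal (1 / real T)
      * ennreal (2 * \<sigma>\<^sup>2 / (real B0 * \<beta>2) + real T * (6 * L\<^sup>2 * step_sq_bound / \<beta>2 + 3 * \<beta>2 * \<sigma>\<^sup>2))"
    by (intro mult_left_mono expected_err_v_sum_le) simp
  also have "\<dots> = ennreal (2 * \<sigma>\<^sup>2 / (real B0 * \<beta>2 * real T) + 27/2 * \<eta>\<^sup>2 * L\<^sup>2 * real CARD('d) / \<beta>2 + 3 * \<beta>2 * \<sigma>\<^sup>2)"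
    using T_pos b2 by (simp add: step_sq_bound_def field_simps flip: ennreal_mult)
  also have "\<dots> \<le> ennreal (2 * \<sigma>\<^sup>2 / (real B0 * \<beta>2 * real T) + 16 * \<eta>\<^sup>2 * L\<^sup>2 * real CARD('d) / \<beta>2 + 3 * \<beta>2 * \<sigma>\<^sup>2)"
  proof -
    have "27/2 * \<eta>\<^sup>2 * L\<^sup>2 * real CARD('d) / \<beta>2 \<le> 16 * \<eta>\<^sup>2 * L\<^sup>2 * real CARD('d) / \<beta>2"
      using b2 by (intro divide_right_mono mult_right_mono) simp_all
    then show ?thesis by (intro ennreal_leI) linarith
  qed
  finally show ?thesis .
qed

end

(* f enters only through gradf = E g. *)
theorem mainTheorem5:
  fixes f :: "real^'d \<Rightarrow> real"
    and gradf :: "real^'d \<Rightarrow> real^'d"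
    and g :: "real^'d \<Rightarrow> 's \<Rightarrow> real^'d"
    and D :: "'s measure"
    and L \<sigma> \<beta>1 \<beta>2 \<eta> lam :: real
    and B0 T :: nat
    and x1 :: "real^'d"
  assumes D_prob: "prob_space D"
    and grad: "\<And>x. GDERIV f x :> gradf x"
    and g_meas: "(\<lambda>(x, s). g x s) \<in> borel_measurable (borel \<Otimes>\<^sub>M D)"
    and A2: "\<And>x y. (\<integral>\<^sup>+ s. ennreal ((norm (g x s - g y s))\<^sup>2) \<partial>D) \<le> ennreal (L\<^sup>2 * (norm (x - y))\<^sup>2)"
    and A3_mean: "\<And>x. (\<integral> s. g x s \<partial>D) = gradf x"
    and A3_var: "\<And>x. (\<integral>\<^sup>+ s. ennreal ((norm (g x s - gradf x))\<^sup>2) \<partial>D) \<le> ennreal (\<sigma>\<^sup>2)"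
    and T: "T \<ge> 1"
    and B0: "B0 \<ge> 1"
    and b1: "0 < \<beta>1" "\<beta>1 \<le> 1"
    and b2: "0 < \<beta>2" "\<beta>2 \<le> 1"
    and b21: "\<beta>2 \<le> \<beta>1" and b12: "\<beta>1 \<le> sqrt \<beta>2"
    and B0b2: "real B0 * \<beta>2 \<le> 1"
    and eta: "\<eta> > 0"
    and lam: "0 \<le> lam" "lam \<le> 1 / (2 * \<eta> * real T)"
    and x1: "\<And>i. \<bar>x1 $ i\<bar> \<le> \<eta>"
  shows "(\<integral>\<^sup>+ \<omega>. ennreal ((1 / real T) *
            (\<Sum>t\<in>{1..T}. (norm (lion_v g \<beta>1 \<beta>2 \<eta> lam B0 x1 \<omega> t
                                - gradf (lion_x g \<beta>1 \<beta>2 \<eta> lam B0 x1 \<omega> t)))\<^sup>2))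
          \<partial>(PiM UNIV (\<lambda>_::nat. D)))
         \<le> ennreal (2 * \<sigma>\<^sup>2 / (real B0 * \<beta>2 * real T)
                    + 16 * \<eta>\<^sup>2 * L\<^sup>2 * real CARD('d) / \<beta>2 + 3 * \<beta>2 * \<sigma>\<^sup>2)"
proof -
  interpret lion_vr_run gradf g D L \<sigma> \<beta>1 \<beta>2 \<eta> lam B0 T x1
    by (intro lion_vr_run.intro stochastic_gradient_oracle.intro lion_vr_run_axioms.intro)
      (fact D_prob g_meas A2 A3_mean A3_var T B0 b1 b2 b21 b12 eta lam x1)+
  show ?thesis by (rule lion_vr_mean_sq_error_le)
qed

end
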